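(* Consider the distributed detection model in the context with $N\ge 2$, and let $m=\frac{N}{2N-2}$. Suppose the fusion center uses the majority rule $K^*=\lceil\frac{N+1}{2}\rceil$ and that $\alpha<\min\{0.5-P_f,\;1-m/P_d\}$. Then for any fixed $P_{0,1}\in[0,1]$, the error probability $P_E$ is a quasi-convex function of $P_{1,0}\in[0,1]$.
   Context: Binary hypothesis test between $H_0$ and $H_1$ with priors $P_0,P_1\in(0,1)$, $P_0+P_1=1$. There are $N$ sensors; conditionally on the hypothesis, their local decisions $v_i\in\{0,1\}$ are i.i.d. with $P(v_i=1\mid H_1)=P_d$, $P(v_i=1\mid H_0)=P_f$, where $0<P_f<P_d<1$. Each sensor independently is Byzantine with probability $\alpha\in[0,1]$. Honest nodes send $u_i=v_i$; a Byzantine node sends $u_i=1$ with probability $P_{1,0}$ when $v_i=0$ and sends $u_i=0$ with probability $P_{0,1}$ when $v_i=1$. Hence conditionally on $H_j$ the $u_i$ are i.i.d. with $P(u_i=1\mid H_0)=\pi_{1,0}=\alpha(P_{1,0}(1-P_f)+(1-P_{0,1})P_f)+(1-\alpha)P_f$ and $P(u_i=1\mid H_1)=\pi_{1,1}=\alpha(P_{1,0}(1-P_d)+(1-P_{0,1})P_d)+(1-\alpha)P_d$. A $K$-out-of-$N$ fusion rule decides $H_1$ iff at least $K$ of the $u_i$ equal $1$; its global false alarm and detection probabilities are $Q_F=\sum_{i=K}^N\binom{N}{i}\pi_{1,0}^i(1-\pi_{1,0})^{N-i}$ and $Q_D=\sum_{i=K}^N\binom{N}{i}\pi_{1,1}^i(1-\pi_{1,1})^{N-i}$,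 and its error probability is $P_E=P_0Q_F+P_1(1-Q_D)$. A function $f$ on an interval is called quasi-convex if there is a point $x^*$ such that $f$ is non-increasing for $x\le x^*$ and non-decreasing for $x\ge x^*$ (this includes $f$ monotone on the whole interval). *)

theory Defs
  imports "HOL-Analysis.Analysis"
begin

definition pi10 :: "real \<Rightarrow> real \<Rightarrow> real \<Rightarrow> real \<Rightarrow> real" where
  "pi10 \<alpha> Pf P10 P01 =
     \<alpha> * (P10 * (1 - Pf) + (1 - P01) * Pf) + (1 - \<alpha>) * Pf"

definition pi11 :: "real \<Rightarrow> real \<Rightarrow> real \<Rightarrow> real \<Rightarrow> real" where
  "pi11 \<alpha> Pd P10 P01 =
     \<alpha> * (P10 * (1 - Pd) + (1 - P01) * Pd) + (1 - \<alpha>) * Pd"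

definition tail_binom :: "nat \<Rightarrow> nat \<Rightarrow> real \<Rightarrow> real" where
  "tail_binom N K p = (\<Sum>i=K..N. real (N choose i) * p ^ i * (1 - p) ^ (N - i))"

definition QF :: "nat \<Rightarrow> nat \<Rightarrow> real \<Rightarrow> real \<Rightarrow> real \<Rightarrow> real \<Rightarrow> real" where
  "QF N K \<alpha> Pf P10 P01 = tail_binom N K (pi10 \<alpha> Pf P10 P01)"

definition QD :: "nat \<Rightarrow> nat \<Rightarrow> real \<Rightarrow> real \<Rightarrow> real \<Rightarrow> real \<Rightarrow> real" where
  "QD N K \<alpha> Pd P10 P01 = tail_binom N K (pi11 \<alpha> Pd P10 P01)"

definition PE :: "real \<Rightarrow> real \<Rightarrow> nat \<Rightarrow> nat \<Rightarrow> real \<Rightarrow> real \<Rightarrow> real \<Rightarrow> real \<Rightarrow> real \<Rightarrow> real" where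
  "PE P0 P1 N K \<alpha> Pf Pd P10 P01 =
     P0 * QF N K \<alpha> Pf P10 P01 + P1 * (1 - QD N K \<alpha> Pd P10 P01)"

text \<open>Quasi-convexity in the sense of the paper: non-increasing up to some point,
  non-decreasing after it (monotone functions included).\<close>
definition quasi_convex_on :: "real set \<Rightarrow> (real \<Rightarrow> real) \<Rightarrow> bool" where
  "quasi_convex_on S f \<longleftrightarrow>
     (\<exists>x0. (\<forall>x\<in>S. \<forall>y\<in>S. x \<le> y \<and> y \<le> x0 \<longrightarrow> f y \<le> f x) \<and>
           (\<forall>x\<in>S. \<forall>y\<in>S. x0 \<le> x \<and> x \<le> y \<longrightarrow> f x \<le> f y))"

end

theory Submission
  imports Defs
begin

text \<open>Write \<open>a = K - 1\<close>, \<open>c = N - K\<close> and \<open>g p = p^a (1 - p)^c\<close>. Differentiating the binomial tails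
  gives \<open>dP_E/dP_{1,0} = N binom(N-1, K-1) (P_0 \<alpha> (1 - P_f) g(\<pi>_{1,0}) - P_1 \<alpha> (1 - P_d) g(\<pi>_{1,1}))\<close>,
  where both \<open>\<pi>_{1,0}\<close> and \<open>\<pi>_{1,1}\<close> are nondecreasing in \<open>P_{1,0}\<close>. The kernel \<open>g\<close> increases up to its
  mode \<open>a/(a+c)\<close>, which for the majority rule is \<open>\<lfloor>N/2\<rfloor>/(N-1) \<in> [1/2, N/(2N-2)]\<close>, and decreases
  after it. The bound on \<open>\<alpha>\<close> keeps \<open>\<pi>_{1,0} \<le> P_f + \<alpha> < 1/2\<close> below the mode and
  \<open>\<pi>_{1,1} \<ge> (1 - \<alpha>) P_d > N/(2N-2)\<close> above it, so the bracket is nondecreasing in \<open>P_{1,0}\<close>: once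
  the derivative is positive it stays positive, which is quasi-convexity.\<close>

lemma tail_binom_has_real_derivative:
  assumes "1 \<le> K" "K \<le> N"
  shows "(tail_binom N K has_real_derivative
           real N * real ((N-1) choose (K-1)) * p^(K-1) * (1-p)^(N-K)) (at p)"
proof -
  define h where "h j = real ((N-1) choose j) * p^j * (1-p)^(N-1-j)" for j
  define t where "t i = real (N choose i) * (real i * p^(i-1) * (1-p)^(N-i)
                   - real (N-i) * p^i * (1-p)^(N-i-1))" for i
  have term_deriv: "((\<lambda>p. real (N choose i) * p^i * (1-p)^(N-i)) has_real_derivative t i) (at p)"
    for i
    unfolding t_def by (auto intro!: derivative_eq_intros simp: algebra_simps)
  have t_telescopes: "t i = real N * (h (i-1) - h i)" if "1 \<le> i" "i \<le> N" for i
  proof -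
    have e1: "real i * real (N choose i) = real N * real ((N-1) choose (i-1))"
      using times_binomial_minus1_eq[of i N] that by (metis of_nat_mult not_one_le_zero neq0_conv)
    have e2: "real (N-i) * real (N choose i) = real N * real ((N-1) choose i)"
      using binomial_absorb_comp[of N i] by (metis of_nat_mult)
    have exps: "N - 1 - (i - 1) = N - i" "N - 1 - i = N - i - 1"
      using that by auto
    have "t i = (real i * real (N choose i)) * p^(i-1) * (1-p)^(N-i)
               - (real (N-i) * real (N choose i)) * p^i * (1-p)^(N-i-1)"
      unfolding t_def by (simp add: algebra_simps)
    then show ?thesis
      unfolding e1 e2 h_def exps by (simp add: algebra_simps)
  qed
  have "(\<Sum>i=K..N. t i) = (\<Sum>i\<in>{Suc (K-1)..N}. real N * ((- h i) - (- h (i-1))))"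
    using assms by (intro sum.cong) (auto simp: t_telescopes)
  also have "\<dots> = real N * h (K-1)"
    using sum_telescope''[of "K-1" N "\<lambda>i. - h i"] assms
    by (simp add: sum_distrib_left[symmetric] h_def)
  finally have "(\<Sum>i=K..N. t i) = real N * real ((N-1) choose (K-1)) * p^(K-1) * (1-p)^(N-K)"
    using assms by (simp add: h_def algebra_simps)
  moreover have "(tail_binom N K has_real_derivative (\<Sum>i=K..N. t i)) (at p)"
    unfolding tail_binom_def[abs_def] by (rule DERIV_sum) (rule term_deriv)
  ultimately show ?thesis by simp
qed

lemma power_mult_power_one_minus_has_real_derivative:
  fixes a c :: nat
  assumes "1 \<le> a" "1 \<le> c"
  shows "((\<lambda>p. p^a * (1-p)^c) has_real_derivative
           p^(a-1) * (1-p)^(c-1) * (real a * (1-p) - real c * p)) (at p)"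
proof -
  obtain a' c' where ac: "a = Suc a'" "c = Suc c'"
    using assms by (metis Suc_le_D One_nat_def)
  have "((\<lambda>p. p^a * (1-p)^c) has_real_derivative
          real a * p^(a-1) * (1-p)^c - real c * p^a * (1-p)^(c-1)) (at p)"
    by (auto intro!: derivative_eq_intros simp: algebra_simps)
  moreover have "real a * p^(a-1) * (1-p)^c - real c * p^a * (1-p)^(c-1)
                   = p^(a-1) * (1-p)^(c-1) * (real a * (1-p) - real c * p)"
    unfolding ac by (simp only: diff_Suc_1 power_Suc) (simp add: algebra_simps)
  ultimately show ?thesis by simp
qed

lemma mono_on_power_mult_power_one_minus:
  fixes a c :: nat
  assumes "1 \<le> a" "1 \<le> c"
  shows "mono_on {0..a / (a + c)} (\<lambda>p::real. p^a * (1-p)^c)"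
proof (rule monotone_onI)
  fix x y :: real assume "x \<in> {0..a / (a + c)}" "y \<in> {0..a / (a + c)}" "x \<le> y"
  then have x: "0 \<le> x" and y: "y \<le> a / (a + c)" by auto
  show "x^a * (1-x)^c \<le> y^a * (1-y)^c"
  proof (rule DERIV_nonneg_imp_nondecreasing[OF \<open>x \<le> y\<close>])
    fix s assume s: "x \<le> s" "s \<le> y"
    have "s \<le> a / (a + c)"
      using s y by linarith
    then have "s * (a + c) \<le> a"
      using assms by (simp add: pos_le_divide_eq)
    then have "0 \<le> real a * (1-s) - real c * s"
      by (simp add: algebra_simps)
    moreover have "s \<le> 1"
      using s y order_trans[OF y divide_le_eq_1_pos[THEN iffD2]] assms by auto
    ultimately have "0 \<le> s^(a-1) * (1-s)^(c-1) * (real a * (1-s) - real c * s)"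
      using s x by simp
    then show "\<exists>d. ((\<lambda>p. p^a * (1-p)^c) has_real_derivative d) (at s) \<and> 0 \<le> d"
      using power_mult_power_one_minus_has_real_derivative[OF assms] by blast
  qed
qed

lemma antimono_on_power_mult_power_one_minus:
  fixes a c :: nat
  assumes "1 \<le> a" "1 \<le> c"
  shows "antimono_on {a / (a + c)..1} (\<lambda>p::real. p^a * (1-p)^c)"
proof (rule monotone_onI)
  fix x y :: real assume "x \<in> {a / (a + c)..1}" "y \<in> {a / (a + c)..1}" "x \<le> y"
  then have x: "a / (a + c) \<le> x" and y: "y \<le> 1" by auto
  have "- (x^a * (1-x)^c) \<le> - (y^a * (1-y)^c)"
  proof (rule DERIV_nonneg_imp_nondecreasing[OF \<open>x \<le> y\<close>])
    fix s assume s: "x \<le> s" "s \<le> y"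
    have mode_le: "a / (a + c) \<le> s"
      using s x by linarith
    then have "a \<le> s * (a + c)"
      using assms by (simp add: pos_divide_le_eq)
    then have "0 \<le> real c * s - real a * (1-s)"
      by (simp add: algebra_simps)
    moreover have "0 \<le> s"
      using mode_le divide_nonneg_nonneg[of "real a" "real (a + c)"] by linarith
    ultimately have "0 \<le> s^(a-1) * (1-s)^(c-1) * (real c * s - real a * (1-s))"
      using s y by simp
    moreover have "((\<lambda>p. - (p^a * (1-p)^c)) has_real_derivative
                     s^(a-1) * (1-s)^(c-1) * (real c * s - real a * (1-s))) (at s)"
      using DERIV_minus[OF power_mult_power_one_minus_has_real_derivative[OF assms]]
      by (simp add: algebra_simps)
    ultimately show "\<exists>d. ((\<lambda>p. - (p^a * (1-p)^c)) has_real_derivative d) (at s) \<and> 0 \<le> d"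
      by blast
  qed
  then show "y^a * (1-y)^c \<le> x^a * (1-x)^c" by simp
qed

lemma pi11_eq_pi10: "pi11 = pi10"
  by (simp add: fun_eq_iff pi10_def pi11_def)

lemma pi10_altdef: "pi10 \<alpha> q P10 P01 = q + \<alpha> * (P10 * (1 - q) - P01 * q)"
  by (simp add: pi10_def algebra_simps)

lemma pi10_has_real_derivative:
  "((\<lambda>x. pi10 \<alpha> q x P01) has_real_derivative \<alpha> * (1 - q)) (at x)"
  unfolding pi10_def by (auto intro!: derivative_eq_intros)

lemma mono_pi10:
  assumes "0 \<le> \<alpha>" "q \<le> 1"
  shows "mono (\<lambda>P10. pi10 \<alpha> q P10 P01)"
  unfolding pi10_altdef using assms
  by (intro monoI add_left_mono mult_left_mono) (auto intro: mult_right_mono)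

lemma pi10_ge:
  assumes "0 \<le> \<alpha>" "0 \<le> q" "q \<le> 1" "0 \<le> P10" "P01 \<le> 1"
  shows "(1 - \<alpha>) * q \<le> pi10 \<alpha> q P10 P01"
  using assms unfolding pi10_def by (simp add: mult_nonneg_nonneg)

lemma pi10_nonneg:
  assumes "0 \<le> \<alpha>" "\<alpha> \<le> 1" "0 \<le> q" "q \<le> 1" "0 \<le> P10" "P01 \<le> 1"
  shows "0 \<le> pi10 \<alpha> q P10 P01"
proof -
  have "0 \<le> (1 - \<alpha>) * q" using assms by simp
  also have "\<dots> \<le> pi10 \<alpha> q P10 P01" using assms by (intro pi10_ge) auto
  finally show ?thesis .
qed

lemma pi10_le:
  assumes "0 \<le> \<alpha>" "0 \<le> q" "q \<le> 1" "P10 \<le> 1" "0 \<le> P01"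
  shows "pi10 \<alpha> q P10 P01 \<le> q + \<alpha>"
proof -
  have "P10 * (1 - q) \<le> 1" "0 \<le> P01 * q"
    using assms by (simp_all add: mult_le_one)
  then have "P10 * (1 - q) - P01 * q \<le> 1"
    by linarith
  then have "\<alpha> * (P10 * (1 - q) - P01 * q) \<le> \<alpha> * 1"
    using assms(1) by (rule mult_left_mono)
  then show ?thesis unfolding pi10_altdef by linarith
qed

lemma pi10_le_one:
  assumes "0 \<le> \<alpha>" "\<alpha> \<le> 1" "0 \<le> q" "q \<le> 1" "P10 \<le> 1" "0 \<le> P01"
  shows "pi10 \<alpha> q P10 P01 \<le> 1"
proof -
  have "P10 * (1 - q) \<le> 1 - q"
    using mult_right_mono[of P10 1 "1 - q"] assms by simp
  moreover have "0 \<le> P01 * q"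
    using assms by simp
  ultimately have "P10 * (1 - q) - P01 * q \<le> 1 - q"
    by linarith
  then have "\<alpha> * (P10 * (1 - q) - P01 * q) \<le> \<alpha> * (1 - q)"
    using assms(1) by (rule mult_left_mono)
  moreover have "\<alpha> * (1 - q) \<le> 1 - q" using assms by (simp add: mult_left_le_one_le)
  ultimately show ?thesis unfolding pi10_altdef by linarith
qed

lemma PE_has_real_derivative_P10:
  assumes "1 \<le> K" "K \<le> N"
  shows "((\<lambda>x. PE P0 P1 N K \<alpha> Pf Pd x P01) has_real_derivative
           real N * real ((N-1) choose (K-1)) *
             (P0 * (\<alpha> * (1 - Pf)) * ((pi10 \<alpha> Pf x P01)^(K-1) * (1 - pi10 \<alpha> Pf x P01)^(N-K))
              - P1 * (\<alpha> * (1 - Pd)) * ((pi11 \<alpha> Pd x P01)^(K-1) * (1 - pi11 \<alpha> Pd x P01)^(N-K))))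
         (at x)"
proof -
  define D where "D q = real N * real ((N-1) choose (K-1)) * (pi10 \<alpha> q x P01)^(K-1)
                         * (1 - pi10 \<alpha> q x P01)^(N-K) * (\<alpha> * (1 - q))" for q
  have tail_deriv: "((\<lambda>x. tail_binom N K (pi10 \<alpha> q x P01)) has_real_derivative D q) (at x)" for q
    unfolding D_def
    by (rule DERIV_chain2[OF tail_binom_has_real_derivative[OF assms] pi10_has_real_derivative])
  have "((\<lambda>x. PE P0 P1 N K \<alpha> Pf Pd x P01) has_real_derivative P0 * D Pf + P1 * (0 - D Pd)) (at x)"
    unfolding PE_def QF_def QD_def pi11_eq_pi10
    by (intro DERIV_add DERIV_cmult DERIV_diff DERIV_const tail_deriv)
  then show ?thesis
    unfolding D_def pi11_eq_pi10 by (simp add: algebra_simps)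
qed

lemma quasi_convex_on_if_derivative_stays_positive:
  fixes f f' :: "real \<Rightarrow> real"
  assumes deriv: "\<And>x. (f has_real_derivative f' x) (at x)"
    and stays_positive: "\<And>x y. a \<le> x \<Longrightarrow> x \<le> y \<Longrightarrow> y \<le> b \<Longrightarrow> 0 < f' x \<Longrightarrow> 0 < f' y"
  shows "quasi_convex_on {a..b} f"
proof -
  \<comment> \<open>Adjoining \<open>b\<close> keeps \<open>S\<close> nonempty, so \<open>Inf S\<close> is the turning point also when \<open>f'\<close> is never positive.\<close>
  define S where "S = {x \<in> {a..b}. 0 < f' x} \<union> {b}"
  define x0 where "x0 = Inf S"
  have bdd: "bdd_below S"
    unfolding S_def by (auto intro: bdd_belowI[of _ "min a b"])
  have "x0 \<le> b"
    unfolding x0_def S_def using bdd S_def by (intro cInf_lower) auto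
  have nonpos_below: "f' t \<le> 0" if "a \<le> t" "t < x0" for t
  proof (rule ccontr)
    assume "\<not> f' t \<le> 0"
    then have "t \<in> S" unfolding S_def using that \<open>x0 \<le> b\<close> by auto
    then have "x0 \<le> t" unfolding x0_def using bdd by (rule cInf_lower)
    then show False using that by simp
  qed
  have pos_above: "0 < f' t" if "x0 < t" "t \<le> b" for t
  proof -
    have "Inf S < t" using \<open>x0 < t\<close> by (simp add: x0_def)
    then obtain u where "u \<in> S" "u < t"
      using bdd by (auto simp: S_def cInf_less_iff)
    then show ?thesis
      using that stays_positive[of u t] unfolding S_def by auto
  qed
  have cont: "continuous_on T f" for T
    by (rule DERIV_continuous_on) (rule has_field_derivative_at_within[OF deriv])
  show ?thesis
    unfolding quasi_convex_on_def
  proof (intro exI[of _ x0] conjI ballI impI)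
    fix x y assume "x \<in> {a..b}" "y \<in> {a..b}" "x \<le> y \<and> y \<le> x0"
    then show "f y \<le> f x"
      using deriv nonpos_below by (intro DERIV_nonpos_imp_decreasing_open[OF _ _ cont]) force+
  next
    fix x y assume "x \<in> {a..b}" "y \<in> {a..b}" "x0 \<le> x \<and> x \<le> y"
    then show "f x \<le> f y"
      using deriv pos_above
      by (intro DERIV_nonneg_imp_increasing_open[OF _ _ cont]) (force intro: less_imp_le)+
  qed
qed

lemma quasi_convex_on_weighted_difference:
  fixes f u v :: "real \<Rightarrow> real"
  assumes "\<And>x. (f has_real_derivative C * (A * u x - B * v x)) (at x)"
    and "0 \<le> C" "0 \<le> A" "0 \<le> B"
    and "mono_on {a..b} u" "antimono_on {a..b} v"
  shows "quasi_convex_on {a..b} f"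
proof (rule quasi_convex_on_if_derivative_stays_positive[OF assms(1)])
  fix x y assume xy: "a \<le> x" "x \<le> y" "y \<le> b" and pos: "0 < C * (A * u x - B * v x)"
  have "A * u x - B * v x \<le> A * u y - B * v y"
    using xy assms(3,4) monotone_onD[OF assms(5), of x y] monotone_onD[OF assms(6), of x y]
    by (intro diff_mono mult_left_mono) auto
  moreover have "0 < C" "0 < A * u x - B * v x"
    using pos assms(2) by (auto simp: zero_less_mult_iff)
  ultimately show "0 < C * (A * u y - B * v y)"
    by (intro mult_pos_pos) auto
qed

lemma nat_ceiling_half_Suc: "nat \<lceil>(real N + 1) / 2\<rceil> = N div 2 + 1"
proof -
  have "real N = 2 * real (N div 2) + real (N mod 2)"
    by (metis div_mult_mod_eq of_nat_add of_nat_mult of_nat_numeral mult.commute)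
  moreover have "N mod 2 = 0 \<or> N mod 2 = 1" by auto
  ultimately have "\<lceil>(real N + 1) / 2\<rceil> = int (N div 2) + 1"
    unfolding ceiling_eq_iff by auto
  then show ?thesis by simp
qed

lemma three_le_of_alpha_bound:
  assumes "2 \<le> N" "0 \<le> \<alpha>" "0 < q" "q < 1" "\<alpha> < 1 - (real N / (2 * real N - 2)) / q"
  shows "3 \<le> N"
proof (rule ccontr)
  assume "\<not> 3 \<le> N"
  with assms(1) have "N = 2" by linarith
  with assms(5) have "\<alpha> < 1 - 1 / q" by simp
  moreover have "1 < 1 / q" using assms(3,4) by simp
  ultimately show False using assms(2) by linarith
qed

lemma pi10_le_majority_mode:
  assumes "2 \<le> N" "0 \<le> \<alpha>" "0 \<le> q" "q \<le> 1" "\<alpha> < 1/2 - q" "P10 \<le> 1" "0 \<le> P01"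
  shows "pi10 \<alpha> q P10 P01 \<le> real (N div 2) / (real N - 1)"
proof -
  have "N \<le> 2 * (N div 2) + 1" by linarith
  then have "real N - 1 \<le> 2 * real (N div 2)"
    using of_nat_mono[where 'a = real] by fastforce
  then have "1 / 2 \<le> real (N div 2) / (real N - 1)"
    using assms(1) by (simp add: field_simps)
  moreover have "pi10 \<alpha> q P10 P01 \<le> q + \<alpha>"
    using assms by (intro pi10_le) auto
  ultimately show ?thesis using assms(5) by linarith
qed

lemma majority_mode_le_pi10:
  assumes "2 \<le> N" "0 \<le> \<alpha>" "0 < q" "q \<le> 1" "0 \<le> P10" "P01 \<le> 1"
    and "\<alpha> < 1 - (real N / (2 * real N - 2)) / q"
  shows "real (N div 2) / (real N - 1) \<le> pi10 \<alpha> q P10 P01"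
proof -
  have "2 * (N div 2) \<le> N" by linarith
  then have "2 * real (N div 2) \<le> real N"
    using of_nat_mono[where 'a = real] by fastforce
  then have "2 * real (N div 2) * (real N - 1) \<le> real N * (real N - 1)"
    using assms(1) by (intro mult_right_mono) auto
  then have "real (N div 2) / (real N - 1) \<le> real N / (2 * real N - 2)"
    using assms(1) by (simp add: divide_simps algebra_simps)
  also have "\<dots> < (1 - \<alpha>) * q"
    using assms(7) pos_divide_less_eq[OF assms(3), of "real N / (2 * real N - 2)" "1 - \<alpha>"]
    by linarith
  also have "\<dots> \<le> pi10 \<alpha> q P10 P01"
    using assms by (intro pi10_ge) auto
  finally show ?thesis by simp
qed

theorem lemma2:
  fixes N :: nat and P0 P1 Pf Pd \<alpha> P01 :: real
  assumes "N \<ge> 2"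
    and "0 < P0" "P0 < 1" "0 < P1" "P1 < 1" "P0 + P1 = 1"
    and "0 < Pf" "Pf < Pd" "Pd < 1"
    and "0 \<le> \<alpha>" "\<alpha> \<le> 1"
    and "\<alpha> < min (1/2 - Pf) (1 - (real N / (2 * real N - 2)) / Pd)"
    and "0 \<le> P01" "P01 \<le> 1"
  shows "quasi_convex_on {0..1}
           (\<lambda>P10. PE P0 P1 N (nat \<lceil>(real N + 1) / 2\<rceil>) \<alpha> Pf Pd P10 P01)"
proof -
  define a where "a = N div 2"
  define c where "c = N - 1 - a"
  have "3 \<le> N"
    using three_le_of_alpha_bound[of N \<alpha> Pd] assms by simp
  then have K: "nat \<lceil>(real N + 1) / 2\<rceil> = Suc a" "N - Suc a = c" "1 \<le> Suc a" "Suc a \<le> N"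
    and ac: "1 \<le> a" "1 \<le> c" "real a / real (a + c) = real (N div 2) / (real N - 1)"
    unfolding nat_ceiling_half_Suc a_def c_def by auto
  have alpha: "\<alpha> < 1/2 - Pf" "\<alpha> < 1 - (real N / (2 * real N - 2)) / Pd"
    using assms(12) by auto
  have false_alarm_below_mode: "pi10 \<alpha> Pf x P01 \<in> {0..a / (a + c)}" if "x \<in> {0..1}" for x
    using pi10_nonneg[of \<alpha> Pf x P01] pi10_le_majority_mode[of N \<alpha> Pf x P01] assms alpha that
    unfolding ac(3) by auto
  have detection_above_mode: "pi11 \<alpha> Pd x P01 \<in> {a / (a + c)..1}" if "x \<in> {0..1}" for x
    using majority_mode_le_pi10[of N \<alpha> Pd x P01] pi10_le_one[of \<alpha> Pd x P01] assms alpha that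
    unfolding ac(3) pi11_eq_pi10 by auto
  have pi_mono: "mono_on {0..1} (\<lambda>x. pi10 \<alpha> q x P01)" if "q \<le> 1" for q
    using mono_pi10[OF assms(10) that] by (rule mono_imp_mono_on)
  have "mono_on {0..1} ((\<lambda>p. p^a * (1-p)^c) \<circ> (\<lambda>x. pi10 \<alpha> Pf x P01))"
    using assms(8,9) false_alarm_below_mode
    by (intro monotone_on_o[OF mono_on_power_mult_power_one_minus[OF ac(1,2)] pi_mono]) auto
  moreover have "antimono_on {0..1} ((\<lambda>p. p^a * (1-p)^c) \<circ> (\<lambda>x. pi11 \<alpha> Pd x P01))"
    using assms(9) detection_above_mode unfolding pi11_eq_pi10
    by (intro monotone_on_o[OF antimono_on_power_mult_power_one_minus[OF ac(1,2)] pi_mono]) auto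
  ultimately show ?thesis
    unfolding K(1) using assms
    by (intro quasi_convex_on_weighted_difference[OF PE_has_real_derivative_P10[OF K(3,4)]])
      (simp_all add: K(2) o_def)
qed

end
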